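(* Let $n\in\mathbb{Z}^+$ with $n\geq 2$, $l\in\{0,1\}$, $U\subset\mathbb{R}^{n-1}$ open, and $0<R_1<R_2<\infty$. Write points of $U\times(0,+\infty)$ as $y=(y_1,\dots,y_{n-1},y_n)$. Let $G\in C^l(U\times(0,+\infty))$ be real-valued and satisfy: (1) $G|_{U\times[R_1,R_2]}$ is real analytic on $U\times[R_1,R_2]$; (2) $\partial_n G=\frac{\partial G}{\partial y_n}\in C^l(U\times(0,+\infty))$. Then: (Statement 1) if moreover $G\equiv 0$ on $U\times(0,R_1]$, then $G\in C^{l+1}(U\times(0,R_2))$; (Statement 2) if moreover $G\equiv 0$ on $U\times[R_2,+\infty)$, then $G\in C^{l+1}(U\times(R_1,+\infty))$.
   Context: "$G|_{U\times[R_1,R_2]}$ is real analytic on $U\times[R_1,R_2]$" means: there exist $\delta_0\in(0,1)$ and a real analytic function $\widetilde G$ on $U\times(R_1(1-\delta_0),R_2(1+\delta_0))$ with $\widetilde G=G$ on $U\times[R_1,R_2]$. *)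

theory Defs
  imports "HOL-Analysis.Analysis"
begin

definition partial :: "('a::real_normed_vector \<Rightarrow> real) \<Rightarrow> 'a \<Rightarrow> 'a \<Rightarrow> real" where
  "partial f b x = deriv (\<lambda>t. f (x + t *\<^sub>R b)) 0"

fun Ck :: "nat \<Rightarrow> ('a::euclidean_space \<Rightarrow> real) \<Rightarrow> 'a set \<Rightarrow> bool" where
  "Ck 0 f S = continuous_on S f"
| "Ck (Suc k) f S =
     (continuous_on S f \<and>
      (\<forall>x\<in>S. \<forall>b\<in>Basis. (\<lambda>t. f (x + t *\<^sub>R b)) differentiable (at 0)) \<and>
      (\<forall>b\<in>Basis. Ck k (partial f b) S))"

definition multi_indices :: "('a::euclidean_space \<Rightarrow> nat) set" where
  "multi_indices = {\<alpha>. \<forall>b. b \<notin> Basis \<longrightarrow> \<alpha> b = 0}"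

definition monomial :: "('a::euclidean_space \<Rightarrow> nat) \<Rightarrow> 'a \<Rightarrow> real" where
  "monomial \<alpha> x = (\<Prod>b\<in>Basis. (x \<bullet> b) ^ \<alpha> b)"

definition real_analytic_on :: "('a::euclidean_space \<Rightarrow> real) \<Rightarrow> 'a set \<Rightarrow> bool" where
  "real_analytic_on f S \<longleftrightarrow>
     (\<forall>a\<in>S. \<exists>r>0. \<exists>c :: ('a \<Rightarrow> nat) \<Rightarrow> real.
        \<forall>x\<in>ball a r. ((\<lambda>\<alpha>. c \<alpha> * monomial \<alpha> (x - a)) has_sum f x) multi_indices)"

end

theory Submission imports Defs begin

(* Say G vanishes below the level R1 (the other case is symmetric). Near the hyperplane
   y_n = R1, G coincides with 0 on one side and with the analytic extension Gt on the other.
   Since G is differentiable in y_n there, its one-sided normal derivatives 0 and d_n Gt agree,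
   while tangential derivatives agree trivially; and two C^1 functions whose values and normal
   derivatives match along a hyperplane glue to a C^1 function. For l = 1 the tangential
   derivatives d_b G are glued in the same way, their normal derivatives matching because mixed
   partials of analytic functions commute, whereas d_n G is C^1 by hypothesis. *)

section \<open>Real analytic functions as sums of power series\<close>

definition multi_degree :: "('a::euclidean_space \<Rightarrow> nat) \<Rightarrow> nat" where
  "multi_degree \<alpha> = (\<Sum>b\<in>Basis. \<alpha> b)"

text \<open>The power series of \<^const>\<open>real_analytic_on\<close>, enumerated by \<^typ>\<open>nat\<close> so that the
  library's results on termwise differentiation of series apply.\<close>

definition mseries :: "(nat \<Rightarrow> real) \<Rightarrow> (nat \<Rightarrow> 'a::euclidean_space \<Rightarrow> nat) \<Rightarrow> 'a \<Rightarrow> 'a \<Rightarrow> real" where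
  "mseries c \<alpha> a x = (\<Sum>n. c n * monomial (\<alpha> n) (x - a))"

definition mseries_expansion ::
    "('a::euclidean_space \<Rightarrow> real) \<Rightarrow> 'a \<Rightarrow> (nat \<Rightarrow> real) \<Rightarrow> (nat \<Rightarrow> 'a \<Rightarrow> nat) \<Rightarrow> real \<Rightarrow> bool" where
  "mseries_expansion f a c \<alpha> r \<longleftrightarrow>
     0 < r \<and> summable (\<lambda>n. \<bar>c n\<bar> * r ^ multi_degree (\<alpha> n)) \<and> (\<forall>x\<in>ball a r. f x = mseries c \<alpha> a x)"

definition locally_mseries :: "('a::euclidean_space \<Rightarrow> real) \<Rightarrow> 'a set \<Rightarrow> bool" where
  "locally_mseries f S \<longleftrightarrow> (\<forall>a\<in>S. \<exists>c \<alpha> r. mseries_expansion f a c \<alpha> r)"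

lemma abs_monomial_le:
  assumes "norm v \<le> r"
  shows "\<bar>monomial \<alpha> v\<bar> \<le> r ^ multi_degree \<alpha>"
  unfolding monomial_def multi_degree_def power_sum abs_prod
proof (intro prod_mono conjI)
  fix b :: 'a assume "b \<in> Basis"
  then have "\<bar>v \<bullet> b\<bar> \<le> r" using Basis_le_norm assms order_trans by blast
  then show "\<bar>(v \<bullet> b) ^ \<alpha> b\<bar> \<le> r ^ \<alpha> b" unfolding power_abs by (intro power_mono) auto
qed auto

lemma multi_degree_fun_upd:
  "b \<in> Basis \<Longrightarrow> multi_degree (\<alpha>(b := m)) + \<alpha> b = multi_degree \<alpha> + m"
  unfolding multi_degree_def
  by (simp add: sum.remove[of Basis b] sum.cong[of "Basis - {b}" _ "\<alpha>(b:=m)" \<alpha>])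

lemma real_times_power_bounded:
  fixes s r :: real
  assumes "0 < s" "s < r"
  obtains C where "\<And>k. real k * s ^ (k - 1) \<le> C * r ^ k"
proof -
  have "(\<lambda>k. real k * (s / r) ^ k) \<longlonglongrightarrow> 0"
    using assms by (intro powser_times_n_limit_0) auto
  then have "Bseq (\<lambda>k. real k * (s / r) ^ k)" by (intro convergent_imp_Bseq convergentI)
  then obtain B where "0 < B" and B: "\<And>k. norm (real k * (s / r) ^ k) \<le> B" unfolding Bseq_def by blast
  have "real k * s ^ (k - 1) \<le> B / s * r ^ k" for k
  proof (cases k)
    case (Suc m)
    have "real k * s ^ (k - 1) = (real k * (s / r) ^ k) * r ^ k / s"
      using assms Suc by (simp add: power_divide field_simps)
    also have "\<dots> \<le> B / s * r ^ k"
      using B[of k] assms by (simp add: divide_right_mono mult_right_mono)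
    finally show ?thesis .
  qed (use \<open>0 < B\<close> assms in simp)
  then show ?thesis by (rule that)
qed

lemma monomial_has_real_derivative_along:
  assumes b: "b \<in> Basis"
  shows "((\<lambda>t. monomial \<alpha> (v + t *\<^sub>R b)) has_real_derivative
           real (\<alpha> b) * monomial (\<alpha>(b := \<alpha> b - 1)) (v + t *\<^sub>R b)) (at t within S)"
proof -
  have line: "monomial \<beta> (v + t *\<^sub>R b) = (v \<bullet> b + t) ^ \<beta> b * (\<Prod>b'\<in>Basis - {b}. (v \<bullet> b') ^ \<beta> b')"
    for \<beta> t
  proof -
    have "(\<Prod>b'\<in>Basis - {b}. ((v + t *\<^sub>R b) \<bullet> b') ^ \<beta> b') = (\<Prod>b'\<in>Basis - {b}. (v \<bullet> b') ^ \<beta> b')"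
      using b by (intro prod.cong) (auto simp: inner_add_left inner_Basis)
    then show ?thesis
      unfolding monomial_def using b by (simp add: prod.remove inner_add_left)
  qed
  define P where "P = (\<Prod>b'\<in>Basis - {b}. (v \<bullet> b') ^ \<alpha> b')"
  have "((\<lambda>t. (v \<bullet> b + t) ^ \<alpha> b * P) has_real_derivative
          real (\<alpha> b) * ((v \<bullet> b + t) ^ (\<alpha> b - 1) * P)) (at t within S)"
    by (auto intro!: derivative_eq_intros)
  moreover have "(\<Prod>b'\<in>Basis - {b}. (v \<bullet> b') ^ (\<alpha>(b := \<alpha> b - 1)) b') = P"
    unfolding P_def by (intro prod.cong) auto
  ultimately show ?thesis by (simp add: line P_def)
qed

lemma mseries_expansion_summable:
  assumes "mseries_expansion f a c \<alpha> r" "norm v \<le> r"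
  shows "summable (\<lambda>n. c n * monomial (\<alpha> n) v)"
proof (rule summable_comparison_test'[where N=0])
  show "summable (\<lambda>n. \<bar>c n\<bar> * r ^ multi_degree (\<alpha> n))"
    using assms(1) by (simp add: mseries_expansion_def)
  show "norm (c n * monomial (\<alpha> n) v) \<le> \<bar>c n\<bar> * r ^ multi_degree (\<alpha> n)" for n
    using abs_monomial_le[OF assms(2)] by (simp add: abs_mult mult_left_mono)
qed

text \<open>Differentiating costs a factor \<open>\<alpha> n b \<le> multi_degree (\<alpha> n)\<close> and one power of the
  radius, which is absorbed by shrinking the radius.\<close>

lemma mseries_expansion_summable_partial:
  assumes E: "mseries_expansion f a c \<alpha> r" and s: "0 < s" "s < r" and b: "b \<in> Basis"
  shows "summable (\<lambda>n. \<bar>c n * real (\<alpha> n b)\<bar> * s ^ multi_degree ((\<alpha> n)(b := \<alpha> n b - 1)))"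
proof -
  obtain C where C: "\<And>k. real k * s ^ (k - 1) \<le> C * r ^ k"
    using real_times_power_bounded[OF s] by blast
  have bound: "real (\<alpha> n b) * s ^ multi_degree ((\<alpha> n)(b := \<alpha> n b - 1)) \<le> C * r ^ multi_degree (\<alpha> n)"
    for n
  proof (cases "\<alpha> n b = 0")
    case False
    let ?d = "multi_degree (\<alpha> n)"
    have "multi_degree ((\<alpha> n)(b := \<alpha> n b - 1)) = ?d - 1"
      using multi_degree_fun_upd[OF b, of "\<alpha> n" "\<alpha> n b - 1"] False by linarith
    then have "real (\<alpha> n b) * s ^ multi_degree ((\<alpha> n)(b := \<alpha> n b - 1)) = real (\<alpha> n b) * s ^ (?d - 1)"
      by simp
    also have "\<dots> \<le> real ?d * s ^ (?d - 1)"
      using b s by (intro mult_right_mono) (auto simp: multi_degree_def intro: member_le_sum)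
    finally show ?thesis using C[of ?d] by linarith
  qed (use C[of 0] s in simp)
  have "norm (\<bar>c n * real (\<alpha> n b)\<bar> * s ^ multi_degree ((\<alpha> n)(b := \<alpha> n b - 1)))
      \<le> C * (\<bar>c n\<bar> * r ^ multi_degree (\<alpha> n))" for n
    using mult_left_mono[OF bound[of n], of "\<bar>c n\<bar>"] s by (simp add: abs_mult mult_ac)
  moreover have "summable (\<lambda>n. C * (\<bar>c n\<bar> * r ^ multi_degree (\<alpha> n)))"
    using E by (simp add: mseries_expansion_def summable_mult)
  ultimately show ?thesis by (blast intro: summable_comparison_test')
qed

lemma mseries_expansion_DERIV:
  assumes E: "mseries_expansion f a c \<alpha> r" and s: "0 < s" "s < r" and b: "b \<in> Basis"
    and x: "x \<in> ball a s"
  shows "((\<lambda>t. f (x + t *\<^sub>R b)) has_real_derivative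
           mseries (\<lambda>n. c n * real (\<alpha> n b)) (\<lambda>n. (\<alpha> n)(b := \<alpha> n b - 1)) a x) (at 0)"
proof -
  define v where "v = x - a"
  define S where "S = ball (0::real) (s - norm v)"
  have v: "norm v < s" using x by (simp add: v_def dist_norm norm_minus_commute)
  have line_in: "norm (v + t *\<^sub>R b) < s" if "t \<in> S" for t
    using that b norm_triangle_ineq[of v "t *\<^sub>R b"] by (simp add: S_def)
  define g where "g n t = c n * monomial (\<alpha> n) (v + t *\<^sub>R b)" for n t
  define g' where "g' n t = c n * real (\<alpha> n b) * monomial ((\<alpha> n)(b := \<alpha> n b - 1)) (v + t *\<^sub>R b)"
    for n t
  have "(g n has_field_derivative g' n t) (at t within S)" for n t
    unfolding g_def g'_def mult.assoc by (intro DERIV_cmult monomial_has_real_derivative_along b)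
  moreover have "uniformly_convergent_on S (\<lambda>n t. \<Sum>i<n. g' i t)"
  proof (rule Weierstrass_m_test'[OF _ mseries_expansion_summable_partial[OF E s b]])
    fix n t assume "t \<in> S"
    then have "\<bar>monomial ((\<alpha> n)(b := \<alpha> n b - 1)) (v + t *\<^sub>R b)\<bar>
        \<le> s ^ multi_degree ((\<alpha> n)(b := \<alpha> n b - 1))"
      using line_in by (intro abs_monomial_le) (simp add: less_imp_le)
    then show "norm (g' n t) \<le> \<bar>c n * real (\<alpha> n b)\<bar> * s ^ multi_degree ((\<alpha> n)(b := \<alpha> n b - 1))"
      unfolding g'_def by (simp add: abs_mult mult_left_mono)
  qed
  moreover have "summable (\<lambda>n. g n 0)"
    unfolding g_def using mseries_expansion_summable[OF E, of v] v s by simp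
  moreover have "0 \<in> S" "0 \<in> interior S" using v by (simp_all add: S_def)
  ultimately have D: "((\<lambda>t. \<Sum>n. g n t) has_real_derivative (\<Sum>n. g' n 0)) (at 0)"
    by (intro has_field_derivative_series'(2)[of S]) (auto simp: S_def)
  have "eventually (\<lambda>t. t \<in> S) (nhds 0)"
    using v by (intro eventually_nhds_in_open) (auto simp: S_def)
  then have ev: "eventually (\<lambda>t. f (x + t *\<^sub>R b) = (\<Sum>n. g n t)) (nhds 0)"
  proof eventually_elim
    case (elim t)
    then have "norm (v + t *\<^sub>R b) < r" using line_in s by fastforce
    then have "x + t *\<^sub>R b \<in> ball a r"
      by (simp add: v_def dist_norm norm_minus_commute algebra_simps)
    then show ?case
      using E by (simp add: mseries_expansion_def mseries_def g_def v_def algebra_simps)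
  qed
  have "(\<Sum>n. g' n 0) = mseries (\<lambda>n. c n * real (\<alpha> n b)) (\<lambda>n. (\<alpha> n)(b := \<alpha> n b - 1)) a x"
    by (simp add: g'_def mseries_def v_def)
  with D show ?thesis using DERIV_cong_ev[OF refl ev refl] by simp
qed

lemma mseries_expansion_partial:
  assumes E: "mseries_expansion f a c \<alpha> r" and s: "0 < s" "s < r" and b: "b \<in> Basis"
  shows "mseries_expansion (partial f b) a (\<lambda>n. c n * real (\<alpha> n b)) (\<lambda>n. (\<alpha> n)(b := \<alpha> n b - 1)) s"
  unfolding mseries_expansion_def partial_def
  using s mseries_expansion_summable_partial[OF E s b] DERIV_imp_deriv[OF mseries_expansion_DERIV[OF E s b]]
  by blast

lemma continuous_on_mseries_expansion:
  assumes E: "mseries_expansion f a c \<alpha> r"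
  shows "continuous_on (ball a r) f"
proof -
  have ul: "uniform_limit (ball a r) (\<lambda>n x. \<Sum>i<n. c i * monomial (\<alpha> i) (x - a)) (mseries c \<alpha> a) sequentially"
    unfolding mseries_def[abs_def]
  proof (rule Weierstrass_m_test)
    show "summable (\<lambda>n. \<bar>c n\<bar> * r ^ multi_degree (\<alpha> n))"
      using E by (simp add: mseries_expansion_def)
    fix n x assume "x \<in> ball a r"
    then have "norm (x - a) \<le> r" by (simp add: dist_norm norm_minus_commute)
    from abs_monomial_le[OF this]
    show "norm (c n * monomial (\<alpha> n) (x - a)) \<le> \<bar>c n\<bar> * r ^ multi_degree (\<alpha> n)"
      by (simp add: abs_mult mult_left_mono)
  qed
  have "continuous_on (ball a r) (mseries c \<alpha> a)"
    by (rule uniform_limit_theorem[OF _ ul])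
       (auto simp: monomial_def intro!: continuous_intros always_eventually)
  then show ?thesis
    by (rule continuous_on_eq) (use E in \<open>simp add: mseries_expansion_def\<close>)
qed

lemma locally_mseries_partial:
  assumes "locally_mseries f S" "b \<in> Basis"
  shows "locally_mseries (partial f b) S"
  unfolding locally_mseries_def
proof
  fix a assume "a \<in> S"
  then obtain c \<alpha> r where E: "mseries_expansion f a c \<alpha> r"
    using assms(1) by (auto simp: locally_mseries_def)
  then have "0 < r" by (simp add: mseries_expansion_def)
  then show "\<exists>c \<alpha> r. mseries_expansion (partial f b) a c \<alpha> r"
    using mseries_expansion_partial[OF E _ _ assms(2), of "r / 2"] by auto
qed

lemma locally_mseries_differentiable_along:
  assumes "locally_mseries f S" "a \<in> S" "b \<in> Basis"
  shows "(\<lambda>t. f (a + t *\<^sub>R b)) differentiable (at 0)"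
proof -
  obtain c \<alpha> r where E: "mseries_expansion f a c \<alpha> r"
    using assms by (auto simp: locally_mseries_def)
  then have "0 < r" by (simp add: mseries_expansion_def)
  then show ?thesis
    using mseries_expansion_DERIV[OF E _ _ assms(3), of "r / 2" a] real_differentiable_def by auto
qed

lemma continuous_on_locally_mseries:
  assumes "locally_mseries f S"
  shows "continuous_on S f"
proof (rule continuous_at_imp_continuous_on, intro ballI)
  fix a assume "a \<in> S"
  then obtain c \<alpha> r where E: "mseries_expansion f a c \<alpha> r"
    using assms by (auto simp: locally_mseries_def)
  then have "0 < r" by (simp add: mseries_expansion_def)
  then show "isCont f a"
    using continuous_on_mseries_expansion[OF E] continuous_on_eq_continuous_at[of "ball a r" f] by auto
qed

lemma locally_mseries_imp_Ck: "locally_mseries f S \<Longrightarrow> Ck k f S"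
proof (induction k arbitrary: f)
  case (Suc k)
  then show ?case
    by (simp add: continuous_on_locally_mseries locally_mseries_differentiable_along locally_mseries_partial)
qed (simp add: continuous_on_locally_mseries)

text \<open>Both iterated partials are expansions with the same coefficients at the centre, so they
  agree there.\<close>

lemma mseries_expansion_partial_commute:
  assumes E: "mseries_expansion f a c \<alpha> r" and b: "b \<in> Basis" and b': "b' \<in> Basis"
  shows "partial (partial f b) b' a = partial (partial f b') b a"
proof -
  have r: "0 < r" using E by (simp add: mseries_expansion_def)
  have E2: "mseries_expansion (partial (partial f b) b') a
      (\<lambda>n. c n * real (\<alpha> n b) * real (((\<alpha> n)(b := \<alpha> n b - 1)) b'))
      (\<lambda>n. ((\<alpha> n)(b := \<alpha> n b - 1))(b' := ((\<alpha> n)(b := \<alpha> n b - 1)) b' - 1)) (r / 4)"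
    if E: "mseries_expansion f a c \<alpha> r" and b: "b \<in> Basis" and b': "b' \<in> Basis" and r: "0 < r"
    for b b' c \<alpha>
    using r by (intro mseries_expansion_partial[OF mseries_expansion_partial[OF E _ _ b, of "r / 2"] _ _ b']) auto
  have "(\<lambda>n. c n * real (\<alpha> n b) * real (((\<alpha> n)(b := \<alpha> n b - 1)) b')) =
        (\<lambda>n. c n * real (\<alpha> n b') * real (((\<alpha> n)(b' := \<alpha> n b' - 1)) b))"
    by (cases "b = b'") auto
  moreover have "(\<lambda>n. ((\<alpha> n)(b := \<alpha> n b - 1))(b' := ((\<alpha> n)(b := \<alpha> n b - 1)) b' - 1)) =
        (\<lambda>n. ((\<alpha> n)(b' := \<alpha> n b' - 1))(b := ((\<alpha> n)(b' := \<alpha> n b' - 1)) b - 1))"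
    by (cases "b = b'") (auto simp: fun_upd_twist)
  ultimately show ?thesis
    using E2[OF E b b' r] E2[OF E b' b r] r by (simp add: mseries_expansion_def)
qed

lemma locally_mseries_partial_commute:
  "locally_mseries f S \<Longrightarrow> a \<in> S \<Longrightarrow> b \<in> Basis \<Longrightarrow> b' \<in> Basis \<Longrightarrow>
     partial (partial f b) b' a = partial (partial f b') b a"
  by (metis locally_mseries_def mseries_expansion_partial_commute)

lemma countable_multi_indices: "countable (multi_indices :: ('a::euclidean_space \<Rightarrow> nat) set)"
proof -
  have "(multi_indices :: ('a \<Rightarrow> nat) set) \<subseteq> (\<lambda>h b. if b \<in> Basis then h b else 0) ` (Basis \<rightarrow>\<^sub>E UNIV)"
  proof
    fix \<alpha> :: "'a \<Rightarrow> nat" assume "\<alpha> \<in> multi_indices"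
    then show "\<alpha> \<in> (\<lambda>h b. if b \<in> Basis then h b else 0) ` (Basis \<rightarrow>\<^sub>E UNIV)"
      by (intro image_eqI[where x="restrict \<alpha> Basis"]) (auto simp: multi_indices_def)
  qed
  then show ?thesis
    by (rule countable_subset) (intro countable_image countable_PiE; simp)
qed

lemma infinite_multi_indices: "infinite (multi_indices :: ('a::euclidean_space \<Rightarrow> nat) set)"
proof -
  obtain b :: 'a where b: "b \<in> Basis" using nonempty_Basis by blast
  have "inj (\<lambda>n. (\<lambda>_. 0)(b := n) :: 'a \<Rightarrow> nat)"
    by (rule injI) (metis fun_upd_same)
  moreover have "range (\<lambda>n. (\<lambda>_. 0)(b := n)) \<subseteq> (multi_indices :: ('a \<Rightarrow> nat) set)"
    using b by (auto simp: multi_indices_def)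
  ultimately show ?thesis
    using range_inj_infinite infinite_super by blast
qed

text \<open>Absolute convergence at radius \<open>\<rho>\<close> comes from convergence at the corner
  \<open>a + (\<rho>, \<dots>, \<rho>)\<close> of the cube, where every monomial is positive.\<close>

lemma power_series_abs_summable:
  fixes a :: "'a::euclidean_space"
  assumes hs: "\<And>x. x \<in> ball a r \<Longrightarrow> ((\<lambda>\<alpha>. c \<alpha> * monomial \<alpha> (x - a)) has_sum f x) multi_indices"
    and \<rho>: "0 < \<rho>" "\<rho> * real DIM('a) < r"
  shows "(\<lambda>\<alpha>. norm (c \<alpha> * \<rho> ^ multi_degree \<alpha>)) summable_on multi_indices"
proof -
  define z where "z = a + \<rho> *\<^sub>R (\<Sum>b\<in>Basis. b)"
  have "(\<Sum>b\<in>(Basis::'a set). norm b) = real DIM('a)"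
    by (simp add: norm_Basis cong: sum.cong)
  then have "norm (\<Sum>b\<in>(Basis::'a set). b) \<le> real DIM('a)"
    using norm_sum[of "\<lambda>b. b" "Basis :: 'a set"] by (simp only:)
  have "norm (z - a) = \<rho> * norm (\<Sum>b\<in>(Basis::'a set). b)"
    using \<rho> by (simp add: z_def)
  also have "\<dots> \<le> \<rho> * real DIM('a)"
    using \<rho> \<open>norm (\<Sum>b\<in>Basis. b) \<le> real DIM('a)\<close> by (intro mult_left_mono) auto
  also have "\<dots> < r" by (fact \<rho>(2))
  finally have z: "z \<in> ball a r" by (simp add: dist_norm norm_minus_commute)
  have "monomial \<alpha> (z - a) = \<rho> ^ multi_degree \<alpha>" for \<alpha>
    unfolding monomial_def multi_degree_def power_sum
    by (intro prod.cong) (auto simp: z_def inner_sum_left inner_Basis)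
  then have "((\<lambda>\<alpha>. c \<alpha> * \<rho> ^ multi_degree \<alpha>) has_sum f z) multi_indices"
    using hs[OF z] by simp
  then show ?thesis
    unfolding summable_on_iff_abs_summable_on_real[symmetric] summable_on_def by blast
qed

lemma real_analytic_on_imp_locally_mseries:
  assumes "real_analytic_on f S"
  shows "locally_mseries f S"
  unfolding locally_mseries_def
proof
  fix a assume "a \<in> S"
  then obtain r c where "r > 0"
    and hs: "\<And>x. x \<in> ball a r \<Longrightarrow> ((\<lambda>\<alpha>. c \<alpha> * monomial \<alpha> (x - a)) has_sum f x) multi_indices"
    using assms unfolding real_analytic_on_def by blast
  define e where "e = from_nat_into (multi_indices :: ('a \<Rightarrow> nat) set)"
  have e: "bij_betw e UNIV multi_indices"
    unfolding e_def by (rule bij_betw_from_nat_into[OF countable_multi_indices infinite_multi_indices])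
  define \<rho> where "\<rho> = r / (1 + real DIM('a))"
  have \<rho>: "0 < \<rho>" "\<rho> < r" "\<rho> * real DIM('a) < r"
    using \<open>r > 0\<close> by (simp_all add: \<rho>_def field_simps)
  have "(\<lambda>n. norm (c (e n) * \<rho> ^ multi_degree (e n))) summable_on UNIV"
    using power_series_abs_summable[OF hs \<rho>(1,3)]
    by (rule summable_on_reindex_bij_betw[OF e, THEN iffD2])
  then have "summable (\<lambda>n. \<bar>c (e n)\<bar> * \<rho> ^ multi_degree (e n))"
    using \<rho> by (simp add: summable_on_UNIV_nonneg_real_iff abs_mult)
  moreover have "f x = mseries (\<lambda>n. c (e n)) e a x" if "x \<in> ball a \<rho>" for x
  proof -
    have "x \<in> ball a r" using that \<rho> by auto
    then have "((\<lambda>\<alpha>. c \<alpha> * monomial \<alpha> (x - a)) has_sum f x) multi_indices" by (rule hs)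
    then have "((\<lambda>n. c (e n) * monomial (e n) (x - a)) has_sum f x) UNIV"
      using has_sum_reindex_bij_betw[OF e, of "\<lambda>\<alpha>. c \<alpha> * monomial \<alpha> (x - a)"] by simp
    then have "(\<lambda>n. c (e n) * monomial (e n) (x - a)) sums f x" by (rule has_sum_imp_sums)
    then show ?thesis by (simp add: mseries_def sums_iff)
  qed
  ultimately have "mseries_expansion f a (\<lambda>n. c (e n)) e \<rho>"
    using \<rho> unfolding mseries_expansion_def by blast
  then show "\<exists>c \<alpha> r. mseries_expansion f a c \<alpha> r" by blast
qed

lemma real_analytic_on_zero: "real_analytic_on (\<lambda>_. 0) S"
  unfolding real_analytic_on_def by (intro ballI exI[of _ 1] conjI exI[of _ "\<lambda>_. 0"]) simp_all

section \<open>Gluing across a hyperplane\<close>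

lemma DERIV_unique_eventually_eq_on:
  fixes f g :: "real \<Rightarrow> real"
  assumes f: "(f has_real_derivative D) (at x)" and g: "(g has_real_derivative E) (at x)"
    and fg: "eventually (\<lambda>y. y \<in> S \<longrightarrow> f y = g y) (nhds x)" and "x \<in> S"
    and "at x within S \<noteq> bot"
  shows "D = E"
proof -
  have "(g has_real_derivative D) (at x within S)"
    by (rule has_field_derivative_cong_ev[OF refl fg refl refl \<open>x \<in> S\<close>, THEN iffD1,
          OF has_field_derivative_at_within[OF f]])
  moreover have "(g has_real_derivative E) (at x within S)"
    using g by (rule has_field_derivative_at_within)
  ultimately show ?thesis using \<open>at x within S \<noteq> bot\<close> by (rule has_field_derivative_unique)
qed

lemma DERIV_piecewise:
  fixes f1 f2 g :: "real \<Rightarrow> real"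
  assumes f1: "(f1 has_real_derivative D) (at x)" and f2: "(f2 has_real_derivative D) (at x)"
    and g1: "eventually (\<lambda>y. y \<in> {..x} \<longrightarrow> f1 y = g y) (nhds x)"
    and g2: "eventually (\<lambda>y. y \<in> {x..} \<longrightarrow> f2 y = g y) (nhds x)"
  shows "(g has_real_derivative D) (at x)"
proof -
  have "(g has_real_derivative D) (at x within {..x})"
    by (rule has_field_derivative_cong_ev[OF refl g1 refl refl, THEN iffD1,
          OF _ has_field_derivative_at_within[OF f1]]) simp
  moreover have "(g has_real_derivative D) (at x within {x..})"
    by (rule has_field_derivative_cong_ev[OF refl g2 refl refl, THEN iffD1,
          OF _ has_field_derivative_at_within[OF f2]]) simp
  ultimately have "(g has_real_derivative D) (at x within {..x} \<union> {x..})"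
    unfolding has_field_derivative_iff Lim_within_Un by blast
  moreover have "{..x} \<union> {x..} = UNIV" by auto
  ultimately show ?thesis by simp
qed

lemma eventually_line_in_open:
  fixes y b :: "'a::real_normed_vector"
  assumes "open N" "y \<in> N"
  shows "eventually (\<lambda>t. y + t *\<^sub>R b \<in> N) (nhds 0)"
proof -
  have "((\<lambda>t. y + t *\<^sub>R b) \<longlongrightarrow> y) (nhds 0)"
    unfolding tendsto_nhds_iff by (auto intro!: tendsto_eq_intros)
  then show ?thesis using assms by (rule topological_tendstoD)
qed

lemma partial_eventually_eq:
  assumes "eventually (\<lambda>t. f (y + t *\<^sub>R b) = g (y + t *\<^sub>R b)) (nhds 0)"
  shows "partial f b y = partial g b y"
  unfolding partial_def by (rule deriv_cong_ev[OF assms refl])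

lemma differentiable_along_eventually_eq:
  fixes f g :: "'a::real_normed_vector \<Rightarrow> real"
  assumes "eventually (\<lambda>t. f (y + t *\<^sub>R b) = g (y + t *\<^sub>R b)) (nhds 0)"
    and "(\<lambda>t. f (y + t *\<^sub>R b)) differentiable (at 0)"
  shows "(\<lambda>t. g (y + t *\<^sub>R b)) differentiable (at 0)"
  using assms DERIV_cong_ev[OF refl assms(1) refl] real_differentiable_def by blast

lemma has_real_derivative_partial:
  "(\<lambda>t. f (y + t *\<^sub>R b)) differentiable (at 0) \<Longrightarrow>
     ((\<lambda>t. f (y + t *\<^sub>R b)) has_real_derivative partial f b y) (at 0)"
  unfolding partial_def by (simp add: DERIV_deriv_iff_real_differentiable)

lemma Ck_mono: "Ck k f S \<Longrightarrow> T \<subseteq> S \<Longrightarrow> Ck k f T"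
  by (induction k arbitrary: f) (auto intro: continuous_on_subset)

locale hyperplane_split =
  fixes K H1 H2 :: "'a::euclidean_space \<Rightarrow> real" and W W1 W2 :: "'a set" and e :: 'a and R :: real
  assumes open_W: "open W" and e_Basis: "e \<in> Basis"
    and lower: "\<And>y. y \<in> W \<Longrightarrow> y \<bullet> e \<le> R \<Longrightarrow> y \<in> W1 \<and> K y = H1 y"
    and upper: "\<And>y. y \<in> W \<Longrightarrow> R \<le> y \<bullet> e \<Longrightarrow> y \<in> W2 \<and> K y = H2 y"
begin

lemma continuous_on:
  assumes "continuous_on W1 H1" "continuous_on W2 H2"
  shows "continuous_on W K"
proof -
  have "continuous_on W (\<lambda>y. if y \<bullet> e \<le> R then H1 y else H2 y)"
  proof (rule continuous_on_cases_le)
    show "continuous_on {y \<in> W. y \<bullet> e \<le> R} H1"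
      using lower by (blast intro: continuous_on_subset[OF assms(1)])
    show "continuous_on {y \<in> W. R \<le> y \<bullet> e} H2"
      using upper by (blast intro: continuous_on_subset[OF assms(2)])
    show "H1 y = H2 y" if "y \<in> W" "y \<bullet> e = R" for y
      using lower[OF that(1)] upper[OF that(1)] that(2) by simp
  qed (intro continuous_intros)
  then show ?thesis
    by (rule continuous_on_eq) (use lower upper in fastforce)
qed

lemma eventually_lower_along:
  assumes "y \<in> W"
  shows "eventually (\<lambda>t. (y + t *\<^sub>R b) \<bullet> e \<le> R \<longrightarrow> H1 (y + t *\<^sub>R b) = K (y + t *\<^sub>R b)) (nhds 0)"
  using eventually_line_in_open[OF open_W assms, of b] by (rule eventually_mono) (simp add: lower)

lemma eventually_upper_along:
  assumes "y \<in> W"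
  shows "eventually (\<lambda>t. R \<le> (y + t *\<^sub>R b) \<bullet> e \<longrightarrow> H2 (y + t *\<^sub>R b) = K (y + t *\<^sub>R b)) (nhds 0)"
  using eventually_line_in_open[OF open_W assms, of b] by (rule eventually_mono) (simp add: upper)

lemma DERIV_along_normal:
  assumes y: "y \<in> W" "y \<bullet> e = R"
    and H1: "(\<lambda>t. H1 (y + t *\<^sub>R e)) differentiable (at 0)"
    and H2: "(\<lambda>t. H2 (y + t *\<^sub>R e)) differentiable (at 0)"
    and match: "partial H1 e y = partial H2 e y"
  shows "((\<lambda>t. K (y + t *\<^sub>R e)) has_real_derivative partial H1 e y) (at 0)"
proof (rule DERIV_piecewise)
  have line: "(y + t *\<^sub>R e) \<bullet> e = R + t" for t
    using y(2) e_Basis by (simp add: inner_add_left)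
  show "eventually (\<lambda>t. t \<in> {..0} \<longrightarrow> H1 (y + t *\<^sub>R e) = K (y + t *\<^sub>R e)) (nhds 0)"
    using eventually_lower_along[OF y(1), of e] by (simp add: line)
  show "eventually (\<lambda>t. t \<in> {0..} \<longrightarrow> H2 (y + t *\<^sub>R e) = K (y + t *\<^sub>R e)) (nhds 0)"
    using eventually_upper_along[OF y(1), of e] by (simp add: line)
  show "((\<lambda>t. H1 (y + t *\<^sub>R e)) has_real_derivative partial H1 e y) (at 0)"
    using H1 by (rule has_real_derivative_partial)
  show "((\<lambda>t. H2 (y + t *\<^sub>R e)) has_real_derivative partial H1 e y) (at 0)"
    using has_real_derivative_partial[OF H2] match by simp
qed

lemma differentiable_along_and_partial:
  assumes H1: "Ck 1 H1 W1" and H2: "Ck 1 H2 W2"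
    and match: "\<And>y. y \<in> W \<Longrightarrow> y \<bullet> e = R \<Longrightarrow> partial H1 e y = partial H2 e y"
    and y: "y \<in> W" and b: "b \<in> Basis"
  shows "(\<lambda>t. K (y + t *\<^sub>R b)) differentiable (at 0) \<and>
         (y \<bullet> e \<le> R \<longrightarrow> partial K b y = partial H1 b y) \<and>
         (R \<le> y \<bullet> e \<longrightarrow> partial K b y = partial H2 b y)"
proof -
  have D1: "(\<lambda>t. H1 (y + t *\<^sub>R b)) differentiable (at 0)" if "y \<bullet> e \<le> R"
    using H1 lower[OF y that] b by simp
  have D2: "(\<lambda>t. H2 (y + t *\<^sub>R b)) differentiable (at 0)" if "R \<le> y \<bullet> e"
    using H2 upper[OF y that] b by simp
  note L = eventually_lower_along[OF y, of b] and U = eventually_upper_along[OF y, of b]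
  consider (below) "y \<bullet> e < R" | (above) "R < y \<bullet> e"
    | (tangential) "y \<bullet> e = R" "b \<noteq> e" | (normal) "y \<bullet> e = R" "b = e"
    by fastforce
  then show ?thesis
  proof cases
    case below
    have "eventually (\<lambda>t. (y + t *\<^sub>R b) \<bullet> e < R) (nhds 0)"
      using eventually_line_in_open[OF open_halfspace_component_lt, of y] below by simp
    with L have "eventually (\<lambda>t. H1 (y + t *\<^sub>R b) = K (y + t *\<^sub>R b)) (nhds 0)"
      by eventually_elim simp
    then show ?thesis
      using below D1 differentiable_along_eventually_eq partial_eventually_eq by fastforce
  next
    case above
    have "eventually (\<lambda>t. R < (y + t *\<^sub>R b) \<bullet> e) (nhds 0)"
      using eventually_line_in_open[OF open_halfspace_component_gt, of y] above by simp
    with U have "eventually (\<lambda>t. H2 (y + t *\<^sub>R b) = K (y + t *\<^sub>R b)) (nhds 0)"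
      by eventually_elim simp
    then show ?thesis
      using above D2 differentiable_along_eventually_eq partial_eventually_eq by fastforce
  next
    case tangential
    then have "(y + t *\<^sub>R b) \<bullet> e = R" for t
      using b e_Basis by (simp add: inner_add_left inner_Basis)
    then have "eventually (\<lambda>t. H1 (y + t *\<^sub>R b) = K (y + t *\<^sub>R b)) (nhds 0)"
      and "eventually (\<lambda>t. H2 (y + t *\<^sub>R b) = K (y + t *\<^sub>R b)) (nhds 0)"
      using L U by simp_all
    then show ?thesis
      using tangential D1 differentiable_along_eventually_eq partial_eventually_eq by fastforce
  next
    case normal
    then have "((\<lambda>t. K (y + t *\<^sub>R e)) has_real_derivative partial H1 e y) (at 0)"
      using D1 D2 match[OF y] by (intro DERIV_along_normal[OF y]) auto
    then show ?thesis
      using normal match[OF y] DERIV_imp_deriv real_differentiable_def by (fastforce simp: partial_def)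
  qed
qed

lemma hyperplane_split_partial:
  assumes "Ck 1 H1 W1" "Ck 1 H2 W2"
    and "\<And>y. y \<in> W \<Longrightarrow> y \<bullet> e = R \<Longrightarrow> partial H1 e y = partial H2 e y"
    and "b \<in> Basis"
  shows "hyperplane_split (partial K b) (partial H1 b) (partial H2 b) W W1 W2 e R"
  using differentiable_along_and_partial[OF assms(1,2)] assms(3,4) lower upper
  by unfold_locales (auto simp: open_W e_Basis)

lemma Ck_1:
  assumes H1: "Ck 1 H1 W1" and H2: "Ck 1 H2 W2"
    and match: "\<And>y. y \<in> W \<Longrightarrow> y \<bullet> e = R \<Longrightarrow> partial H1 e y = partial H2 e y"
  shows "Ck 1 K W"
proof -
  have "continuous_on W (partial K b)" if b: "b \<in> Basis" for b
  proof -
    interpret P: hyperplane_split "partial K b" "partial H1 b" "partial H2 b" W W1 W2 e R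
      by (rule hyperplane_split_partial[OF H1 H2 _ b]) (rule match)
    show ?thesis
      using H1 H2 b by (intro P.continuous_on) simp_all
  qed
  moreover have "(\<lambda>t. K (y + t *\<^sub>R b)) differentiable (at 0)" if "y \<in> W" "b \<in> Basis" for y b
    by (rule differentiable_along_and_partial[OF H1 H2 _ that, THEN conjunct1]) (rule match)
  ultimately show ?thesis
    using continuous_on H1 H2 by simp
qed

lemma Ck_2:
  assumes H1: "Ck 2 H1 W1" and H2: "Ck 2 H2 W2"
    and match: "\<And>y. y \<in> W \<Longrightarrow> y \<bullet> e = R \<Longrightarrow> partial H1 e y = partial H2 e y"
    and commute1: "\<And>y b. y \<in> W \<Longrightarrow> y \<bullet> e = R \<Longrightarrow> b \<in> Basis \<Longrightarrow>
                     partial (partial H1 b) e y = partial (partial H1 e) b y"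
    and commute2: "\<And>y b. y \<in> W \<Longrightarrow> y \<bullet> e = R \<Longrightarrow> b \<in> Basis \<Longrightarrow>
                     partial (partial H2 b) e y = partial (partial H2 e) b y"
    and normal: "Ck 1 (partial K e) W"
  shows "Ck 2 K W"
proof -
  have H1': "Ck 1 H1 W1" "\<And>b. b \<in> Basis \<Longrightarrow> Ck 1 (partial H1 b) W1"
    and H2': "Ck 1 H2 W2" "\<And>b. b \<in> Basis \<Longrightarrow> Ck 1 (partial H2 b) W2"
    using H1 H2 by (simp_all add: numeral_2_eq_2)
  have "Ck 1 (partial K b) W" if b: "b \<in> Basis" for b
  proof (cases "b = e")
    case True
    with normal show ?thesis by simp
  next
    case False
    interpret P: hyperplane_split "partial K b" "partial H1 b" "partial H2 b" W W1 W2 e R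
      by (rule hyperplane_split_partial[OF H1'(1) H2'(1) _ b]) (rule match)
    have "partial (partial H1 b) e y = partial (partial H2 b) e y" if y: "y \<in> W" "y \<bullet> e = R" for y
    proof -
      have on_interface: "(y + t *\<^sub>R b) \<bullet> e = R" for t
        using y False b e_Basis by (simp add: inner_add_left inner_Basis)
      have "eventually (\<lambda>t. partial H1 e (y + t *\<^sub>R b) = partial H2 e (y + t *\<^sub>R b)) (nhds 0)"
        using eventually_line_in_open[OF open_W y(1), of b]
        by (rule eventually_mono) (simp add: match on_interface)
      then have "partial (partial H1 e) b y = partial (partial H2 e) b y"
        by (rule partial_eventually_eq)
      then show ?thesis
        using commute1[OF y b] commute2[OF y b] by simp
    qed
    then show ?thesis
      using H1'(2) H2'(2) b by (intro P.Ck_1)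
  qed
  moreover have "Ck 1 K W"
    by (rule Ck_1[OF H1'(1) H2'(1)]) (rule match)
  ultimately show ?thesis by (simp add: numeral_2_eq_2)
qed

lemma partial_normal_eq:
  assumes y: "y \<in> W" "y \<bullet> e = R"
    and K: "(\<lambda>t. K (y + t *\<^sub>R e)) differentiable (at 0)"
    and H1: "(\<lambda>t. H1 (y + t *\<^sub>R e)) differentiable (at 0)"
    and H2: "(\<lambda>t. H2 (y + t *\<^sub>R e)) differentiable (at 0)"
  shows "partial H1 e y = partial H2 e y"
proof -
  have line: "(y + t *\<^sub>R e) \<bullet> e = R + t" for t
    using y(2) e_Basis by (simp add: inner_add_left)
  have "partial H1 e y = partial K e y"
  proof (rule DERIV_unique_eventually_eq_on[of _ _ 0 _ _ "{-1..0}"])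
    show "eventually (\<lambda>t. t \<in> {-1..0} \<longrightarrow> H1 (y + t *\<^sub>R e) = K (y + t *\<^sub>R e)) (nhds 0)"
      using eventually_lower_along[OF y(1), of e] by (rule eventually_mono) (simp add: line)
  qed (use H1 K in \<open>simp_all add: has_real_derivative_partial at_within_Icc_at_left\<close>)
  also have "partial K e y = partial H2 e y"
  proof (rule DERIV_unique_eventually_eq_on[of _ _ 0 _ _ "{0..1}"])
    show "eventually (\<lambda>t. t \<in> {0..1} \<longrightarrow> K (y + t *\<^sub>R e) = H2 (y + t *\<^sub>R e)) (nhds 0)"
      using eventually_upper_along[OF y(1), of e] by (rule eventually_mono) (simp add: line eq_commute)
  qed (use H2 K in \<open>simp_all add: has_real_derivative_partial at_within_Icc_at_right\<close>)
  finally show ?thesis .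
qed

lemma Ck_Suc_if_real_analytic:
  assumes "l \<le> 1" and "real_analytic_on H1 W1" "real_analytic_on H2 W2"
    and K: "\<And>y. y \<in> W \<Longrightarrow> y \<bullet> e = R \<Longrightarrow> (\<lambda>t. K (y + t *\<^sub>R e)) differentiable (at 0)"
    and normal: "Ck l (partial K e) W"
  shows "Ck (Suc l) K W"
proof -
  have A1: "locally_mseries H1 W1" and A2: "locally_mseries H2 W2"
    using assms(2,3) by (simp_all add: real_analytic_on_imp_locally_mseries)
  have match: "partial H1 e y = partial H2 e y" if "y \<in> W" "y \<bullet> e = R" for y
    using that lower[OF that(1)] upper[OF that(1)] e_Basis
    by (intro partial_normal_eq K locally_mseries_differentiable_along[OF A1]
        locally_mseries_differentiable_along[OF A2]) auto
  consider "l = 0" | "l = 1" using \<open>l \<le> 1\<close> by linarith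
  then show ?thesis
  proof cases
    case 1
    then show ?thesis
      using Ck_1[OF locally_mseries_imp_Ck[OF A1] locally_mseries_imp_Ck[OF A2] match] by simp
  next
    case 2
    have "Ck 2 K W"
      using normal 2 lower upper e_Basis
      by (intro Ck_2 locally_mseries_imp_Ck[OF A1] locally_mseries_imp_Ck[OF A2] match
          locally_mseries_partial_commute[OF A1] locally_mseries_partial_commute[OF A2]) auto
    then show ?thesis using 2 by (simp add: numeral_2_eq_2)
  qed
qed

end

theorem lemma2p2:
  fixes G :: "'a::euclidean_space \<times> real \<Rightarrow> real"
    and U :: "'a set" and l :: nat and R1 R2 :: real
  assumes l: "l \<le> 1"
    and U: "open U"
    and R: "0 < R1" "R1 < R2"
    and G_C: "Ck l G (U \<times> {0<..})"
    and G_an: "\<exists>\<delta>0 \<in> {0<..<1}. \<exists>Gt :: 'a \<times> real \<Rightarrow> real.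
                 real_analytic_on Gt (U \<times> {R1 * (1 - \<delta>0) <..< R2 * (1 + \<delta>0)}) \<and>
                 (\<forall>y \<in> U \<times> {R1..R2}. Gt y = G y)"
    and dG_ex: "\<forall>y \<in> U \<times> {0<..}. (\<lambda>t. G (y + t *\<^sub>R (0, 1))) differentiable (at 0)"
    and dG_C: "Ck l (partial G (0, 1)) (U \<times> {0<..})"
  shows "((\<forall>y \<in> U \<times> {0<..R1}. G y = 0) \<longrightarrow> Ck (l + 1) G (U \<times> {0<..<R2})) \<and>
         ((\<forall>y \<in> U \<times> {R2..}. G y = 0) \<longrightarrow> Ck (l + 1) G (U \<times> {R1<..}))"
proof -
  obtain \<delta> Gt where \<delta>: "0 < \<delta>"
    and Gt: "real_analytic_on Gt (U \<times> {R1 * (1 - \<delta>) <..< R2 * (1 + \<delta>)})"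
    and G_Gt: "\<And>y. y \<in> U \<times> {R1..R2} \<Longrightarrow> G y = Gt y"
    using G_an by force
  have widen: "0 < R1 * \<delta>" "0 < R2 * \<delta>"
    using \<delta> R by simp_all
  have [simp]: "y \<bullet> (0, 1) = snd y" for y :: "'a \<times> real"
    by (cases y) simp
  show ?thesis
  proof (intro conjI impI)
    assume "\<forall>y \<in> U \<times> {0<..R1}. G y = 0"
    then interpret hyperplane_split G "\<lambda>_. 0" Gt "U \<times> {0<..<R2}" UNIV
        "U \<times> {R1 * (1 - \<delta>) <..< R2 * (1 + \<delta>)}" "(0, 1)" R1
      using U widen G_Gt by unfold_locales (auto simp: open_Times Basis_prod_def algebra_simps)
    have "Ck (Suc l) G (U \<times> {0<..<R2})"
      by (rule Ck_Suc_if_real_analytic[OF l real_analytic_on_zero Gt _ Ck_mono[OF dG_C]])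
        (use dG_ex in auto)
    then show "Ck (l + 1) G (U \<times> {0<..<R2})" by simp
  next
    assume "\<forall>y \<in> U \<times> {R2..}. G y = 0"
    then interpret hyperplane_split G Gt "\<lambda>_. 0" "U \<times> {R1<..}"
        "U \<times> {R1 * (1 - \<delta>) <..< R2 * (1 + \<delta>)}" UNIV "(0, 1)" R2
      using U widen G_Gt by unfold_locales (auto simp: open_Times Basis_prod_def algebra_simps)
    have "Ck (Suc l) G (U \<times> {R1<..})"
      by (rule Ck_Suc_if_real_analytic[OF l Gt real_analytic_on_zero _ Ck_mono[OF dG_C]])
        (use dG_ex R in auto)
    then show "Ck (l + 1) G (U \<times> {R1<..})" by simp
  qed
qed

end
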